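(* (Metatheory of CPL* natural deduction.) Fix a set $W$ of worlds with a converse well-founded accessibility relation $\prec$. For all contexts $\Gamma,\Gamma'$, worlds $w, w'$, and propositions $A, C$: (i) (Hypothesis) If $A[w] \in \Gamma$, then $\Gamma \vdash_{\mathbf{CPL*}} A[w]$. (ii) (Generalized weakening) If $\Gamma \subseteq_w \Gamma'$ and $\Gamma \vdash_{\mathbf{CPL*}} A[w]$, then $\Gamma' \vdash_{\mathbf{CPL*}} A[w]$. (iii) (Substitution) If $w' \prec^* w$, $\Gamma \vdash_{\mathbf{CPL*}} A[w]$, and $\Gamma, A[w] \vdash_{\mathbf{CPL*}} C[w']$, then $\Gamma \vdash_{\mathbf{CPL*}} C[w']$.
   Context: Fix a set $W$ of worlds and a binary accessibility relation $\prec$ on $W$ that is converse well-founded: there is no infinite chain $w_0 \prec w_1 \prec w_2 \prec \cdots$. $\prec^*$ and $\prec^+$ denote reflexive–transitive and transitive closures. Propositions: $A,B,C ::= Q \mid \bot \mid A \supset B \mid \Diamond A \mid \Box A$, $Q$ atomic. A context $\Gamma$ is a finite collection of judgments $A[w]$ ($w\in W$). $\Gamma \subseteq_w \Gamma'$ holds iff (a) for all $w'$ with $w \prec^* w'$, $A[w'] \in \Gamma$ implies $A[w'] \in \Gamma'$, and (b) for all $w'$ with $w \prec^+ w'$, $A[w'] \in \Gamma'$ implies $A[w'] \in \Gamma$. The judgment $\Gamma \vdash_{\mathbf{CPL*}} A[w]$ (natural deduction for de-tethered constructive provability logic) is defined one world at a time (provability at $w$ after provability at all $w'$ with $w\prec^+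 w'$; well-defined by converse well-foundedness) as the least relation closed under (premises may be meta-level quantifications/implications): (hyp) $\Gamma, A[w] \vdash A[w]$. ($\bot E$) If $w' \prec^* w$ and $\Gamma \vdash \bot[w]$ then $\Gamma \vdash C[w']$. ($\supset I$) If $\Gamma, A[w] \vdash B[w]$ then $\Gamma \vdash A \supset B[w]$. ($\supset E$) If $\Gamma \vdash A \supset B[w]$ and $\Gamma \vdash A[w]$ then $\Gamma \vdash B[w]$. ($\Diamond I$) If $w \prec w'$ and $\Gamma \vdash A[w']$ then $\Gamma \vdash \Diamond A[w]$. ($\Box I$) If $\Gamma \vdash A[w']$ for every $w'$ with $w \prec w'$, then $\Gamma \vdash \Box A[w]$. ($\Diamond E$) If $w'' \prec^* w$, $\Gamma \vdash \Diamond A[w]$, and for every $w'$ with $w \prec w'$, $\Gamma \vdash A[w']$ implies $\Gamma \vdash C[w'']$, then $\Gamma \vdash C[w'']$. ($\Box E$) If $w'' \prec^* w$, $\Gamma \vdash \Box A[w]$, and ($\Gamma \vdash A[w']$ for all $w'$ with $w \prec w'$) implies $\Gamma \vdash C[w'']$, then $\Gamma \vdash C[w'']$. *)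

theory Defs
  imports Main
begin

datatype 'q fml = Atom 'q | Bot | Imp "'q fml" "'q fml" | Dia "'q fml" | Box "'q fml"

text \<open>Worlds are the elements of the world type; acc is the accessibility relation.
A context is a (finite) set of judgments A[w], represented as pairs (A, w).\<close>
type_synonym ('q, 'w) ctx = "('q fml \<times> 'w) set"

definition conv_wf :: "('w \<Rightarrow> 'w \<Rightarrow> bool) \<Rightarrow> bool" where
  "conv_wf acc \<longleftrightarrow> \<not> (\<exists>f :: nat \<Rightarrow> 'w. \<forall>i. acc (f i) (f (Suc i)))"

definition ctx_sub :: "('w \<Rightarrow> 'w \<Rightarrow> bool) \<Rightarrow> 'w \<Rightarrow> ('q, 'w) ctx \<Rightarrow> ('q, 'w) ctx \<Rightarrow> bool" where
  "ctx_sub acc w \<Gamma> \<Gamma>' \<longleftrightarrow>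
     (\<forall>w' A. acc\<^sup>*\<^sup>* w w' \<longrightarrow> (A, w') \<in> \<Gamma> \<longrightarrow> (A, w') \<in> \<Gamma>') \<and>
     (\<forall>w' A. acc\<^sup>+\<^sup>+ w w' \<longrightarrow> (A, w') \<in> \<Gamma>' \<longrightarrow> (A, w') \<in> \<Gamma>)"

text \<open>H gives provability (pairs (context, proposition)) at
strictly higher worlds (already defined); S is the candidate relation at the current world w.
Provability at w is the least fixed point of this (monotone in S) operator.\<close>
definition cpl_step ::
  "('w \<Rightarrow> 'w \<Rightarrow> bool) \<Rightarrow> ('w \<Rightarrow> (('q, 'w) ctx \<times> 'q fml) set) \<Rightarrow> 'w
     \<Rightarrow> (('q, 'w) ctx \<times> 'q fml) set \<Rightarrow> (('q, 'w) ctx \<times> 'q fml) set" where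
  "cpl_step acc H w S =
    (let P = (\<lambda>v. if v = w then S else H v) in
     {(\<Gamma>, C).
        \<comment> \<open>hyp\<close>
        (C, w) \<in> \<Gamma>
      \<or> \<comment> \<open>bot E\<close>
        (\<exists>v. acc\<^sup>*\<^sup>* w v \<and> (\<Gamma>, Bot) \<in> P v)
      \<or> \<comment> \<open>imp I\<close>
        (\<exists>A B. C = Imp A B \<and> (insert (A, w) \<Gamma>, B) \<in> S)
      \<or> \<comment> \<open>imp E\<close>
        (\<exists>A. (\<Gamma>, Imp A C) \<in> S \<and> (\<Gamma>, A) \<in> S)
      \<or> \<comment> \<open>dia I\<close>
        (\<exists>A w'. C = Dia A \<and> acc w w' \<and> (\<Gamma>, A) \<in> H w')
      \<or> \<comment> \<open>box I\<close>
        (\<exists>A. C = Box A \<and> (\<forall>w'. acc w w' \<longrightarrow> (\<Gamma>, A) \<in> H w'))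
      \<or> \<comment> \<open>dia E\<close>
        (\<exists>v A. acc\<^sup>*\<^sup>* w v \<and> (\<Gamma>, Dia A) \<in> P v \<and>
               (\<forall>w'. acc v w' \<longrightarrow> (\<Gamma>, A) \<in> H w' \<longrightarrow> (\<Gamma>, C) \<in> S))
      \<or> \<comment> \<open>box E\<close>
        (\<exists>v A. acc\<^sup>*\<^sup>* w v \<and> (\<Gamma>, Box A) \<in> P v \<and>
               ((\<forall>w'. acc v w' \<longrightarrow> (\<Gamma>, A) \<in> H w') \<longrightarrow> (\<Gamma>, C) \<in> S))})"

definition cpl_fam :: "('w \<Rightarrow> 'w \<Rightarrow> bool) \<Rightarrow> 'w \<Rightarrow> (('q, 'w) ctx \<times> 'q fml) set" where
  "cpl_fam acc = wfrec {(v, w). acc\<^sup>+\<^sup>+ w v} (\<lambda>H w. lfp (cpl_step acc H w))"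

definition cpl :: "('w \<Rightarrow> 'w \<Rightarrow> bool) \<Rightarrow> ('q, 'w) ctx \<Rightarrow> 'q fml \<Rightarrow> 'w \<Rightarrow> bool" where
  "cpl acc \<Gamma> A w \<longleftrightarrow> (\<Gamma>, A) \<in> cpl_fam acc w"

end

theory Submission
  imports Defs
begin

text \<open>Provability at a world w depends only on the rules applied at w and on provability at
  strictly higher worlds, which is fixed before w. Hence all properties are proved by
  well-founded induction on worlds, with an inner rule induction at the current world.
  Weakening and substitution are instances of a single transfer principle: if every judgment of
  \<open>\<Gamma>\<close> at w or above is available in \<open>\<Gamma>'\<close>, and every judgment of \<open>\<Gamma>'\<close> strictly above w is
  available in \<open>\<Gamma>\<close>, then \<open>\<Gamma> \<turnstile> A[w]\<close> implies \<open>\<Gamma>' \<turnstile> A[w]\<close>. For weakening "available" means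
  membership, for substitution derivability. The converse condition above w is forced by the
  \<open>\<diamond>\<close>- and \<open>\<box>\<close>-eliminations, whose continuations take derivations at higher worlds as
  hypotheses.\<close>

lemma wf_tranclp_converse:
  assumes "conv_wf acc"
  shows "wf {(v, w). acc\<^sup>+\<^sup>+ w v}"
proof -
  have "wf {(v, w). acc w v}"
    using assms unfolding conv_wf_def wf_iff_no_infinite_down_chain by auto
  then have "wf ({(v, w). acc w v}\<^sup>+)"
    by (rule wf_trancl)
  moreover have "{(v, w). acc w v}\<^sup>+ = {(v, w). acc\<^sup>+\<^sup>+ w v}"
  proof -
    have "{(v, w). acc w v} = {(w, v). acc w v}\<inverse>" by auto
    then show ?thesis by (simp add: trancl_converse tranclp_unfold) auto
  qed
  ultimately show ?thesis by simp
qed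

lemma conv_wf_not_tranclp_refl: "conv_wf acc \<Longrightarrow> \<not> acc\<^sup>+\<^sup>+ w w"
  using wf_not_refl[OF wf_tranclp_converse] by (metis (mono_tags) case_prodI mem_Collect_eq)

lemma mono_cpl_step:
  fixes H :: "'w \<Rightarrow> (('q, 'w) ctx \<times> 'q fml) set"
  shows "mono (cpl_step acc H w)"
proof (rule monoI)
  fix S S' :: "(('q, 'w) ctx \<times> 'q fml) set"
  assume "S \<subseteq> S'"
  then have "x \<in> (if v = w then S else H v) \<Longrightarrow> x \<in> (if v = w then S' else H v)" for x v
    by (auto split: if_splits)
  with \<open>S \<subseteq> S'\<close> show "cpl_step acc H w S \<subseteq> cpl_step acc H w S'"
    unfolding cpl_step_def Let_def by blast
qed

lemma cpl_step_cong:
  assumes "\<And>v. acc\<^sup>+\<^sup>+ w v \<Longrightarrow> H v = H' v"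
  shows "cpl_step acc H w = cpl_step acc H' w"
proof -
  have above: "acc\<^sup>*\<^sup>* w v \<Longrightarrow> (if v = w then S else H v) = (if v = w then S else H' v)" for v S
    using assms by (metis rtranclpD)
  have succ: "acc w u \<Longrightarrow> H u = H' u" for u
    using assms by blast
  have succ_above: "acc\<^sup>*\<^sup>* w v \<Longrightarrow> acc v u \<Longrightarrow> H u = H' u" for u v
    using assms by (meson rtranclp_into_tranclp1)
  show ?thesis
    unfolding cpl_step_def Let_def
    by (intro ext) (simp only: above succ succ_above cong: conj_cong imp_cong)
qed

lemma cpl_fam_unfold:
  assumes "conv_wf acc"
  shows "cpl_fam acc w = lfp (cpl_step acc (cpl_fam acc) w)"
proof -
  let ?R = "{(v, w). acc\<^sup>+\<^sup>+ w v}"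
  have "cpl_fam acc w = lfp (cpl_step acc (cut (cpl_fam acc) ?R w) w)"
    unfolding cpl_fam_def by (rule wfrec[OF wf_tranclp_converse[OF assms]])
  also have "cpl_step acc (cut (cpl_fam acc) ?R w) w = cpl_step acc (cpl_fam acc) w"
    by (rule cpl_step_cong) (simp add: cut_apply)
  finally show ?thesis .
qed

lemma cpl_unfold:
  assumes "conv_wf acc"
  shows "cpl acc \<Gamma> C w \<longleftrightarrow>
      (C, w) \<in> \<Gamma>
    \<or> (\<exists>v. acc\<^sup>*\<^sup>* w v \<and> cpl acc \<Gamma> Bot v)
    \<or> (\<exists>A B. C = Imp A B \<and> cpl acc (insert (A, w) \<Gamma>) B w)
    \<or> (\<exists>A. cpl acc \<Gamma> (Imp A C) w \<and> cpl acc \<Gamma> A w)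
    \<or> (\<exists>A u. C = Dia A \<and> acc w u \<and> cpl acc \<Gamma> A u)
    \<or> (\<exists>A. C = Box A \<and> (\<forall>u. acc w u \<longrightarrow> cpl acc \<Gamma> A u))
    \<or> (\<exists>v A. acc\<^sup>*\<^sup>* w v \<and> cpl acc \<Gamma> (Dia A) v \<and>
         (\<forall>u. acc v u \<longrightarrow> cpl acc \<Gamma> A u \<longrightarrow> cpl acc \<Gamma> C w))
    \<or> (\<exists>v A. acc\<^sup>*\<^sup>* w v \<and> cpl acc \<Gamma> (Box A) v \<and>
         ((\<forall>u. acc v u \<longrightarrow> cpl acc \<Gamma> A u) \<longrightarrow> cpl acc \<Gamma> C w))"
proof -
  have "cpl_fam acc w = cpl_step acc (cpl_fam acc) w (cpl_fam acc w)"
    using cpl_fam_unfold[OF assms] lfp_unfold[OF mono_cpl_step] by metis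
  then have fixpoint: "cpl acc \<Gamma> C w \<longleftrightarrow> (\<Gamma>, C) \<in> cpl_step acc (cpl_fam acc) w (cpl_fam acc w)"
    unfolding cpl_def by (rule arg_cong)
  have fam_if: "(if v = w then cpl_fam acc w else cpl_fam acc v) = cpl_fam acc v" for v
    by simp
  show ?thesis
    using fixpoint unfolding cpl_step_def Let_def fam_if cpl_def mem_Collect_eq case_prod_conv
    by blast
qed

lemma cpl_hyp:
  assumes "conv_wf acc" "(C, w) \<in> \<Gamma>" shows "cpl acc \<Gamma> C w"
  using assms(2) by (subst cpl_unfold[OF assms(1)]) blast

lemma cpl_botE:
  assumes "conv_wf acc" "acc\<^sup>*\<^sup>* w v" "cpl acc \<Gamma> Bot v" shows "cpl acc \<Gamma> C w"
  using assms(2,3) by (subst cpl_unfold[OF assms(1)]) blast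

lemma cpl_impI:
  assumes "conv_wf acc" "cpl acc (insert (A, w) \<Gamma>) B w" shows "cpl acc \<Gamma> (Imp A B) w"
  using assms(2) by (subst cpl_unfold[OF assms(1)]) blast

lemma cpl_impE:
  assumes "conv_wf acc" "cpl acc \<Gamma> (Imp A B) w" "cpl acc \<Gamma> A w" shows "cpl acc \<Gamma> B w"
  using assms(2,3) by (subst cpl_unfold[OF assms(1)]) blast

lemma cpl_diaI:
  assumes "conv_wf acc" "acc w u" "cpl acc \<Gamma> A u" shows "cpl acc \<Gamma> (Dia A) w"
  using assms(2,3) by (subst cpl_unfold[OF assms(1)]) blast

lemma cpl_boxI:
  assumes "conv_wf acc" "\<And>u. acc w u \<Longrightarrow> cpl acc \<Gamma> A u" shows "cpl acc \<Gamma> (Box A) w"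
  using assms(2) by (subst cpl_unfold[OF assms(1)]) blast

lemma cpl_diaE:
  assumes "conv_wf acc" "acc\<^sup>*\<^sup>* w v" "cpl acc \<Gamma> (Dia A) v"
    and "\<And>u. acc v u \<Longrightarrow> cpl acc \<Gamma> A u \<Longrightarrow> cpl acc \<Gamma> C w"
  shows "cpl acc \<Gamma> C w"
  using assms(2-) by (subst cpl_unfold[OF assms(1)]) blast

lemma cpl_boxE:
  assumes "conv_wf acc" "acc\<^sup>*\<^sup>* w v" "cpl acc \<Gamma> (Box A) v"
    and "(\<And>u. acc v u \<Longrightarrow> cpl acc \<Gamma> A u) \<Longrightarrow> cpl acc \<Gamma> C w"
  shows "cpl acc \<Gamma> C w"
  using assms(2-) by (subst cpl_unfold[OF assms(1)]) blast

text \<open>Only premises at the current world w carry the induction hypothesis; those at higher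
  worlds are judgments of an already fixed relation.\<close>
lemma cpl_induct[consumes 2, case_names hyp botE impI impE diaI boxI diaE boxE]:
  assumes wfa: "conv_wf acc" and der: "cpl acc \<Gamma> C w"
    and hyp: "\<And>\<Gamma> C. (C, w) \<in> \<Gamma> \<Longrightarrow> Q \<Gamma> C"
    and botE: "\<And>\<Gamma> C v. acc\<^sup>*\<^sup>* w v \<Longrightarrow> cpl acc \<Gamma> Bot v \<Longrightarrow> (v = w \<Longrightarrow> Q \<Gamma> Bot) \<Longrightarrow> Q \<Gamma> C"
    and impI: "\<And>\<Gamma> A B. Q (insert (A, w) \<Gamma>) B \<Longrightarrow> Q \<Gamma> (Imp A B)"
    and impE: "\<And>\<Gamma> A C. Q \<Gamma> (Imp A C) \<Longrightarrow> Q \<Gamma> A \<Longrightarrow> Q \<Gamma> C"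
    and diaI: "\<And>\<Gamma> A u. acc w u \<Longrightarrow> cpl acc \<Gamma> A u \<Longrightarrow> Q \<Gamma> (Dia A)"
    and boxI: "\<And>\<Gamma> A. (\<And>u. acc w u \<Longrightarrow> cpl acc \<Gamma> A u) \<Longrightarrow> Q \<Gamma> (Box A)"
    and diaE: "\<And>\<Gamma> C v A. acc\<^sup>*\<^sup>* w v \<Longrightarrow> cpl acc \<Gamma> (Dia A) v \<Longrightarrow> (v = w \<Longrightarrow> Q \<Gamma> (Dia A))
      \<Longrightarrow> (\<And>u. acc v u \<Longrightarrow> cpl acc \<Gamma> A u \<Longrightarrow> Q \<Gamma> C) \<Longrightarrow> Q \<Gamma> C"
    and boxE: "\<And>\<Gamma> C v A. acc\<^sup>*\<^sup>* w v \<Longrightarrow> cpl acc \<Gamma> (Box A) v \<Longrightarrow> (v = w \<Longrightarrow> Q \<Gamma> (Box A))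
      \<Longrightarrow> ((\<And>u. acc v u \<Longrightarrow> cpl acc \<Gamma> A u) \<Longrightarrow> Q \<Gamma> C) \<Longrightarrow> Q \<Gamma> C"
  shows "Q \<Gamma> C"
proof -
  have fam: "lfp (cpl_step acc (cpl_fam acc) w) = cpl_fam acc w"
    by (rule cpl_fam_unfold[OF wfa, symmetric])
  have "(\<Gamma>, C) \<in> lfp (cpl_step acc (cpl_fam acc) w)"
    using der unfolding fam cpl_def .
  then have "case_prod Q (\<Gamma>, C)"
  proof (rule lfp_induct_set[OF _ mono_cpl_step])
    fix x
    assume step: "x \<in> cpl_step acc (cpl_fam acc) w (lfp (cpl_step acc (cpl_fam acc) w) \<inter> {x. case_prod Q x})"
    obtain \<Delta> D where x: "x = (\<Delta>, D)" by fastforce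
    have at_w: "(\<Gamma>', X) \<in> (if v = w then cpl_fam acc w \<inter> Collect (case_prod Q) else cpl_fam acc v)
        \<longleftrightarrow> cpl acc \<Gamma>' X v \<and> (v = w \<longrightarrow> Q \<Gamma>' X)" for \<Gamma>' X v
      by (auto simp: cpl_def)
    from step show "case_prod Q x"
      unfolding x fam cpl_step_def Let_def at_w mem_Collect_eq case_prod_conv Int_iff cpl_def[symmetric]
      by (elim disjE exE conjE) (blast intro: hyp botE impI impE diaI boxI diaE boxE)+
  qed
  then show ?thesis by simp
qed

lemma cpl_transfer_at:
  fixes R :: "'w \<Rightarrow> ('q, 'w) ctx \<Rightarrow> ('q, 'w) ctx \<Rightarrow> bool"
  assumes wfa: "conv_wf acc"
    and R_hyp: "\<And>\<Gamma> \<Gamma>' B. R w \<Gamma> \<Gamma>' \<Longrightarrow> (B, w) \<in> \<Gamma> \<Longrightarrow> cpl acc \<Gamma>' B w"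
    and R_insert: "\<And>\<Gamma> \<Gamma>' A. R w \<Gamma> \<Gamma>' \<Longrightarrow> R w (insert (A, w) \<Gamma>) (insert (A, w) \<Gamma>')"
    and above_fwd: "\<And>v \<Gamma> \<Gamma>' X. R w \<Gamma> \<Gamma>' \<Longrightarrow> acc\<^sup>+\<^sup>+ w v \<Longrightarrow> cpl acc \<Gamma> X v \<Longrightarrow> cpl acc \<Gamma>' X v"
    and above_bwd: "\<And>v \<Gamma> \<Gamma>' X. R w \<Gamma> \<Gamma>' \<Longrightarrow> acc\<^sup>+\<^sup>+ w v \<Longrightarrow> cpl acc \<Gamma>' X v \<Longrightarrow> cpl acc \<Gamma> X v"
  shows "cpl acc \<Gamma> A w \<Longrightarrow> R w \<Gamma> \<Gamma>' \<Longrightarrow> cpl acc \<Gamma>' A w"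
proof -
  let ?Q = "\<lambda>\<Gamma> X. \<forall>\<Gamma>'. R w \<Gamma> \<Gamma>' \<longrightarrow> cpl acc \<Gamma>' X w"
  have major: "cpl acc \<Gamma>' X v"
    if "R w \<Gamma> \<Gamma>'" "acc\<^sup>*\<^sup>* w v" "cpl acc \<Gamma> X v" "v = w \<Longrightarrow> ?Q \<Gamma> X" for \<Gamma> \<Gamma>' X v
    using that above_fwd by (metis rtranclpD)
  have "?Q \<Gamma> A" if "cpl acc \<Gamma> A w"
    using wfa that
  proof (induction rule: cpl_induct)
    case (hyp \<Gamma> C)
    then show ?case using R_hyp by blast
  next
    case (botE \<Gamma> C v)
    then show ?case using major cpl_botE[OF wfa] by blast
  next
    case (impI \<Gamma> A B)
    then show ?case using R_insert cpl_impI[OF wfa] by blast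
  next
    case (impE \<Gamma> A C)
    then show ?case using cpl_impE[OF wfa] by blast
  next
    case (diaI \<Gamma> A u)
    then show ?case using above_fwd cpl_diaI[OF wfa] by blast
  next
    case (boxI \<Gamma> A)
    then show ?case using above_fwd cpl_boxI[OF wfa] by blast
  next
    case (diaE \<Gamma> C v A)
    show ?case
    proof (intro allI impI)
      fix \<Gamma>' assume R: "R w \<Gamma> \<Gamma>'"
      show "cpl acc \<Gamma>' C w"
      proof (rule cpl_diaE[OF wfa diaE(1)])
        show "cpl acc \<Gamma>' (Dia A) v" using major[OF R diaE(1,2)] diaE(3) by blast
        show "cpl acc \<Gamma>' C w" if "acc v u" "cpl acc \<Gamma>' A u" for u
          using diaE(4) above_bwd[OF R rtranclp_into_tranclp1[OF diaE(1)]] that R by blast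
      qed
    qed
  next
    case (boxE \<Gamma> C v A)
    show ?case
    proof (intro allI impI)
      fix \<Gamma>' assume R: "R w \<Gamma> \<Gamma>'"
      show "cpl acc \<Gamma>' C w"
      proof (rule cpl_boxE[OF wfa boxE(1)])
        show "cpl acc \<Gamma>' (Box A) v" using major[OF R boxE(1,2)] boxE(3) by blast
        show "cpl acc \<Gamma>' C w" if "\<And>u. acc v u \<Longrightarrow> cpl acc \<Gamma>' A u"
          using boxE(4) above_bwd[OF R rtranclp_into_tranclp1[OF boxE(1)]] that R by blast
      qed
    qed
  qed
  then show "cpl acc \<Gamma> A w \<Longrightarrow> R w \<Gamma> \<Gamma>' \<Longrightarrow> cpl acc \<Gamma>' A w" by blast
qed

lemma cpl_transfer:
  fixes R :: "'w \<Rightarrow> ('q, 'w) ctx \<Rightarrow> ('q, 'w) ctx \<Rightarrow> bool"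
  assumes wfa: "conv_wf acc"
    and R_hyp: "\<And>w \<Gamma> \<Gamma>' B. R w \<Gamma> \<Gamma>' \<Longrightarrow> (B, w) \<in> \<Gamma> \<Longrightarrow> cpl acc \<Gamma>' B w"
    and R_insert: "\<And>w \<Gamma> \<Gamma>' A. R w \<Gamma> \<Gamma>' \<Longrightarrow> R w (insert (A, w) \<Gamma>) (insert (A, w) \<Gamma>')"
    and R_above: "\<And>w v \<Gamma> \<Gamma>'. R w \<Gamma> \<Gamma>' \<Longrightarrow> acc\<^sup>+\<^sup>+ w v \<Longrightarrow> R v \<Gamma> \<Gamma>' \<and> R v \<Gamma>' \<Gamma>"
  shows "R w \<Gamma> \<Gamma>' \<Longrightarrow> cpl acc \<Gamma> A w \<Longrightarrow> cpl acc \<Gamma>' A w"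
proof (induction w arbitrary: \<Gamma> \<Gamma>' A rule: wf_induct[OF wf_tranclp_converse[OF wfa]])
  case (1 w)
  have IH: "cpl acc \<Gamma>' X v" if "acc\<^sup>+\<^sup>+ w v" "R v \<Gamma> \<Gamma>'" "cpl acc \<Gamma> X v" for v \<Gamma> \<Gamma>' X
    using 1(1) that by blast
  show ?case
  proof (rule cpl_transfer_at[where R = R and w = w, OF wfa R_hyp R_insert _ _ 1(3,2)])
    show "cpl acc \<Gamma>' X v" if "R w \<Gamma> \<Gamma>'" "acc\<^sup>+\<^sup>+ w v" "cpl acc \<Gamma> X v" for v \<Gamma> \<Gamma>' X
      using IH R_above that by blast
    show "cpl acc \<Gamma> X v" if "R w \<Gamma> \<Gamma>'" "acc\<^sup>+\<^sup>+ w v" "cpl acc \<Gamma>' X v" for v \<Gamma> \<Gamma>' X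
      using IH R_above that by blast
  qed
qed

lemma ctx_sub_above:
  assumes "ctx_sub acc w \<Gamma> \<Gamma>'" "acc\<^sup>+\<^sup>+ w v"
  shows "ctx_sub acc v \<Gamma> \<Gamma>' \<and> ctx_sub acc v \<Gamma>' \<Gamma>"
  using assms unfolding ctx_sub_def
  by (meson rtranclp_trans rtranclp_tranclp_tranclp tranclp_into_rtranclp tranclp_rtranclp_tranclp)

lemma ctx_sub_insert: "ctx_sub acc w \<Gamma> \<Gamma>' \<Longrightarrow> ctx_sub acc w (insert (A, w) \<Gamma>) (insert (A, w) \<Gamma>')"
  unfolding ctx_sub_def by auto

lemma cpl_weaken:
  assumes "conv_wf acc" "ctx_sub acc w \<Gamma> \<Gamma>'" "cpl acc \<Gamma> A w"
  shows "cpl acc \<Gamma>' A w"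
proof (rule cpl_transfer[where R = "ctx_sub acc", OF assms(1) _ ctx_sub_insert ctx_sub_above assms(2,3)])
  show "cpl acc \<Delta>' B v" if "ctx_sub acc v \<Delta> \<Delta>'" "(B, v) \<in> \<Delta>" for v \<Delta> \<Delta>' B
    using that cpl_hyp[OF assms(1)] unfolding ctx_sub_def by blast
qed

lemma cpl_weaken_insert:
  assumes "conv_wf acc" "acc\<^sup>*\<^sup>* w v" "cpl acc \<Gamma> B v"
  shows "cpl acc (insert (A, w) \<Gamma>) B v"
proof (rule cpl_weaken[OF assms(1) _ assms(3)])
  have "\<not> acc\<^sup>+\<^sup>+ v w"
    using assms(2) conv_wf_not_tranclp_refl[OF assms(1)] by (metis rtranclp_tranclp_tranclp)
  then show "ctx_sub acc v \<Gamma> (insert (A, w) \<Gamma>)"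
    unfolding ctx_sub_def by auto
qed

definition ctx_derivable :: "('w \<Rightarrow> 'w \<Rightarrow> bool) \<Rightarrow> 'w \<Rightarrow> ('q, 'w) ctx \<Rightarrow> ('q, 'w) ctx \<Rightarrow> bool" where
  "ctx_derivable acc w \<Gamma> \<Gamma>' \<longleftrightarrow>
     (\<forall>v B. acc\<^sup>*\<^sup>* w v \<longrightarrow> (B, v) \<in> \<Gamma> \<longrightarrow> cpl acc \<Gamma>' B v) \<and>
     (\<forall>v B. acc\<^sup>+\<^sup>+ w v \<longrightarrow> (B, v) \<in> \<Gamma>' \<longrightarrow> cpl acc \<Gamma> B v)"

lemma ctx_derivable_insert:
  assumes "conv_wf acc" "ctx_derivable acc w \<Gamma> \<Gamma>'"
  shows "ctx_derivable acc w (insert (A, w) \<Gamma>) (insert (A, w) \<Gamma>')"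
  using assms(2) conv_wf_not_tranclp_refl[OF assms(1)]
  unfolding ctx_derivable_def
  by (auto intro: cpl_hyp[OF assms(1)] cpl_weaken_insert[OF assms(1)] dest: tranclp_into_rtranclp)

lemma ctx_derivable_above:
  assumes "ctx_derivable acc w \<Gamma> \<Gamma>'" "acc\<^sup>+\<^sup>+ w v"
  shows "ctx_derivable acc v \<Gamma> \<Gamma>' \<and> ctx_derivable acc v \<Gamma>' \<Gamma>"
  using assms unfolding ctx_derivable_def
  by (meson rtranclp_trans rtranclp_tranclp_tranclp tranclp_into_rtranclp tranclp_rtranclp_tranclp)

lemma cpl_ctx_derivable:
  assumes "conv_wf acc" "ctx_derivable acc w \<Gamma> \<Gamma>'" "cpl acc \<Gamma> A w"
  shows "cpl acc \<Gamma>' A w"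
proof (rule cpl_transfer[where R = "ctx_derivable acc",
      OF assms(1) _ ctx_derivable_insert[OF assms(1)] ctx_derivable_above assms(2,3)])
  show "cpl acc \<Delta>' B v" if "ctx_derivable acc v \<Delta> \<Delta>'" "(B, v) \<in> \<Delta>" for v \<Delta> \<Delta>' B
    using that unfolding ctx_derivable_def by blast
qed

lemma cpl_subst:
  assumes "conv_wf acc" "cpl acc \<Gamma> A w" "cpl acc (insert (A, w) \<Gamma>) C w'"
  shows "cpl acc \<Gamma> C w'"
proof (rule cpl_ctx_derivable[OF assms(1) _ assms(3)])
  show "ctx_derivable acc w' (insert (A, w) \<Gamma>) \<Gamma>"
    using assms(2) cpl_hyp[OF assms(1)] unfolding ctx_derivable_def by auto
qed

theorem theorem4:
  fixes acc :: "'w \<Rightarrow> 'w \<Rightarrow> bool"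
  assumes "conv_wf acc"
  shows "(\<forall>(\<Gamma> :: ('q, 'w) ctx) A w. finite \<Gamma> \<longrightarrow> (A, w) \<in> \<Gamma> \<longrightarrow> cpl acc \<Gamma> A w)
       \<and> (\<forall>(\<Gamma> :: ('q, 'w) ctx) \<Gamma>' A w. finite \<Gamma> \<longrightarrow> finite \<Gamma>' \<longrightarrow>
            ctx_sub acc w \<Gamma> \<Gamma>' \<longrightarrow> cpl acc \<Gamma> A w \<longrightarrow> cpl acc \<Gamma>' A w)
       \<and> (\<forall>(\<Gamma> :: ('q, 'w) ctx) A C w w'. finite \<Gamma> \<longrightarrow> acc\<^sup>*\<^sup>* w' w \<longrightarrow>
            cpl acc \<Gamma> A w \<longrightarrow> cpl acc (insert (A, w) \<Gamma>) C w' \<longrightarrow> cpl acc \<Gamma> C w')"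
proof (intro conjI allI impI)
  show "cpl acc \<Gamma> A w" if "(A, w) \<in> \<Gamma>" for \<Gamma> :: "('q, 'w) ctx" and A w
    using cpl_hyp[OF assms that] .
  show "cpl acc \<Gamma>' A w" if "ctx_sub acc w \<Gamma> \<Gamma>'" "cpl acc \<Gamma> A w" for \<Gamma> \<Gamma>' :: "('q, 'w) ctx" and A w
    using cpl_weaken[OF assms that] .
  show "cpl acc \<Gamma> C w'" if "cpl acc \<Gamma> A w" "cpl acc (insert (A, w) \<Gamma>) C w'"
    for \<Gamma> :: "('q, 'w) ctx" and A C w w'
    using cpl_subst[OF assms that] .
qed

end
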